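(* Let $X_1,\dots,X_n$ be i.i.d. positive random variables with mean $\mu$ such that $\alpha=\|X_1-\mu\|_{\psi_1}<+\infty$, and let $\hat X_n=\frac1n\sum_{i=1}^nX_i$. Let $\eta=\alpha/\mu$, and for $\delta\in(0,1)$ let $C_{n,\delta}=2\sqrt{\log(2/\delta)/n}+2\log(2/\delta)/n$. Then with probability at least $1-\delta$, $$\mu\ge \hat X_n\,(1-\eta C_{n,\delta})_+ .$$ Moreover, if $\eta C_{n,\delta}\le \tfrac14$, then with probability at least $1-\delta$, $$\hat X_n(1-\eta C_{n,\delta})_+\le\mu\le \hat X_n\Bigl(1+\tfrac43\eta C_{n,\delta}\Bigr).$$
   Context: For a real random variable $Y$, $\|Y\|_{\psi_1}=\inf\{C>0:\mathbb E[\exp(|Y|/C)]\le2\}$ (sub-exponential / Orlicz norm). $(x)_+=\max\{x,0\}$. *)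

theory Defs
  imports "HOL-Probability.Probability"
begin

text \<open>Sub-exponential (Orlicz psi_1) norm:
  inf {C > 0. E[exp(|Y|/C)] \<le> 2}, with the expectation taken as a
  nonnegative (possibly infinite) integral; value \<infinity> if the set is empty.\<close>
definition psi1_norm :: "'a measure \<Rightarrow> ('a \<Rightarrow> real) \<Rightarrow> ereal" where
  "psi1_norm M Y = Inf {ereal C | C. C > 0 \<and>
      (\<integral>\<^sup>+ x. ennreal (exp (\<bar>Y x\<bar> / C)) \<partial>M) \<le> 2}"

definition C_nd :: "nat \<Rightarrow> real \<Rightarrow> real" where
  "C_nd n \<delta> = 2 * sqrt (ln (2 / \<delta>) / real n) + 2 * ln (2 / \<delta>) / real n"

end

theory Submission
  imports Defs
begin

text \<open>Bernstein's inequality for sub-exponential variables. If \<open>E exp(|Y|/a) \<le> 2\<close> and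
  \<open>E Y = 0\<close>, comparing exponential series termwise gives \<open>E exp(l Y) \<le> exp((l a)\<^sup>2)\<close> for
  \<open>0 \<le> l \<le> 1/a\<close>. By independence and Chernoff's bound, with a tilt \<open>l\<close> adapted to
  \<open>C(n,\<delta>)\<close>, the centred sum of \<open>n\<close> copies exceeds \<open>n a C(n,\<delta>)\<close> in absolute value with
  probability at most \<open>\<delta>\<close>. Letting \<open>a\<close> decrease to the \<open>\<psi>\<^sub>1\<close>-norm \<open>\<alpha>\<close>, the sample mean
  satisfies \<open>|X - \<mu>| \<le> \<alpha> C(n,\<delta>) = \<eta> C(n,\<delta>) \<mu>\<close> with probability at least \<open>1 - \<delta>\<close>, and
  both bounds on \<open>\<mu>\<close> are elementary consequences of this relative deviation bound.\<close>

lemma exp_scaled_le_quadratic: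
  fixes s z :: real
  assumes s: "0 \<le> s" "s \<le> 1"
  shows "exp (s * z) \<le> 1 + s * z + s\<^sup>2 * (exp \<bar>z\<bar> - 1)"
proof -
  define r where "r = (\<lambda>x::real. \<lambda>n::nat. inverse (fact (n + 2)) *\<^sub>R (x ^ (n + 2)))"
  have summable: "summable (r x)" for x
    using summable_ignore_initial_segment[OF summable_exp_generic[of x], of 2]
    by (simp add: r_def)
  have exp_r: "exp x = 1 + x + suminf (r x)" for x
    unfolding r_def by (rule exp_first_two_terms)
  have "r (s * z) n \<le> s\<^sup>2 * r \<bar>z\<bar> n" for n
  proof -
    have "(s * z) ^ (n + 2) \<le> \<bar>(s * z) ^ (n + 2)\<bar>"
      by simp
    also have "\<dots> = s ^ n * s\<^sup>2 * \<bar>z\<bar> ^ (n + 2)"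
      using s by (simp add: power_abs power_mult_distrib power_add abs_mult power2_eq_square)
    also have "\<dots> \<le> s\<^sup>2 * \<bar>z\<bar> ^ (n + 2)"
      using mult_right_mono[OF power_le_one[OF s, of n], of "s\<^sup>2 * \<bar>z\<bar> ^ (n + 2)"] by simp
    finally show ?thesis
      unfolding r_def by (simp add: divide_right_mono field_simps)
  qed
  then have "suminf (r (s * z)) \<le> s\<^sup>2 * suminf (r \<bar>z\<bar>)"
    using suminf_le[OF _ summable summable_mult[OF summable]] suminf_mult[OF summable] by metis
  moreover have "suminf (r \<bar>z\<bar>) \<le> exp \<bar>z\<bar> - 1"
    using exp_r[of "\<bar>z\<bar>"] by simp
  ultimately show ?thesis
    using exp_r[of "s * z"] mult_left_mono[of _ _ "s\<^sup>2"] by fastforce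
qed

text \<open>The tilt is \<open>u = min 1 (sqrt (t/N))\<close>.\<close>

lemma exists_tilt_sqrt_plus_linear_rate:
  fixes t N :: real
  assumes t: "t > 0" and N: "N > 0"
  shows "\<exists>u. 0 < u \<and> u \<le> 1 \<and> N * u\<^sup>2 - u * N * (2 * sqrt (t / N) + 2 * t / N) \<le> -t"
proof (cases "t \<le> N")
  case True
  define u where "u = sqrt (t / N)"
  have u2: "u\<^sup>2 = t / N" and "0 < u"
    using t N by (simp_all add: u_def)
  moreover have "u \<le> 1"
    using True N by (simp add: u_def)
  moreover have "N * u\<^sup>2 - u * N * (2 * sqrt (t / N) + 2 * t / N) = -t - 2 * t * u"
    using N u2 by (simp flip: u_def) (simp add: field_simps power2_eq_square)
  ultimately show ?thesis
    using t by (intro exI[of _ u]) auto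
next
  case False
  have "N * (2 * sqrt (t / N) + 2 * t / N) = 2 * N * sqrt (t / N) + 2 * t"
    using N by (simp add: field_simps)
  moreover have "0 \<le> N * sqrt (t / N)"
    using N t by simp
  ultimately show ?thesis
    using False by (intro exI[of _ 1]) simp
qed

lemma mult_pos_part_le_if_abs_diff_le:
  fixes h \<mu> \<eta> :: real
  assumes dev: "\<bar>h - \<mu>\<bar> \<le> \<eta> * \<mu>" and \<mu>: "\<mu> > 0"
  shows "h * max 0 (1 - \<eta>) \<le> \<mu>"
proof (cases "\<eta> < 1")
  case True
  have "h * (1 - \<eta>) \<le> (\<mu> + \<eta> * \<mu>) * (1 - \<eta>)"
    using True dev by (intro mult_right_mono) auto
  also have "\<dots> = \<mu> - \<eta>\<^sup>2 * \<mu>"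
    by (simp add: algebra_simps power2_eq_square)
  also have "\<dots> \<le> \<mu>"
    using \<mu> by simp
  finally show ?thesis
    using True by simp
qed (use \<mu> in simp)

lemma le_mult_if_abs_diff_le:
  fixes h \<mu> \<eta> :: real
  assumes dev: "\<bar>h - \<mu>\<bar> \<le> \<eta> * \<mu>" and \<mu>: "\<mu> > 0" and \<eta>: "\<eta> \<le> 1/4"
  shows "\<mu> \<le> h * (1 + 4/3 * \<eta>)"
proof -
  have "0 \<le> \<eta>"
    using order_trans[OF abs_ge_zero dev] \<mu> by (simp add: zero_le_mult_iff)
  have "\<mu> \<le> \<mu> * (1 + \<eta> * (1 - 4 * \<eta>) / 3)"
    using \<open>0 \<le> \<eta>\<close> \<eta> \<mu> by simp
  also have "\<dots> = (\<mu> - \<eta> * \<mu>) * (1 + 4/3 * \<eta>)"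
    by (simp add: field_simps)
  also have "\<dots> \<le> h * (1 + 4/3 * \<eta>)"
    using dev \<open>0 \<le> \<eta>\<close> by (intro mult_right_mono) auto
  finally show ?thesis .
qed

lemma psi1_norm_nonneg: "0 \<le> psi1_norm M Y"
  unfolding psi1_norm_def by (auto intro!: Inf_greatest)

lemma psi1_norm_lessD:
  assumes "psi1_norm M Y < ereal a"
  shows "(\<integral>\<^sup>+x. ennreal (exp (\<bar>Y x\<bar> / a)) \<partial>M) \<le> 2"
proof -
  obtain c where c: "0 < c" "c < a" and bound: "(\<integral>\<^sup>+x. ennreal (exp (\<bar>Y x\<bar> / c)) \<partial>M) \<le> 2"
    using assms unfolding psi1_norm_def Inf_less_iff by auto
  have "(\<integral>\<^sup>+x. ennreal (exp (\<bar>Y x\<bar> / a)) \<partial>M) \<le> (\<integral>\<^sup>+x. ennreal (exp (\<bar>Y x\<bar> / c)) \<partial>M)"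
    using c by (intro nn_integral_mono ennreal_leI exp_mono divide_left_mono) auto
  with bound show ?thesis
    by simp
qed

lemma
  assumes X: "X \<in> borel_measurable M" and X': "X' \<in> borel_measurable M"
    and distr: "distr M borel X = distr M borel X'"
  shows integrable_cong_distr: "integrable M X \<longleftrightarrow> integrable M X'"
    and integral_cong_distr: "integral\<^sup>L M X = integral\<^sup>L M X'"
    and psi1_norm_cong_distr: "psi1_norm M (\<lambda>x. X x - c) = psi1_norm M (\<lambda>x. X' x - c)"
proof -
  show "integrable M X \<longleftrightarrow> integrable M X'"
    using integrable_distr_eq[OF X, of "\<lambda>y. y"] integrable_distr_eq[OF X', of "\<lambda>y. y"] distr
    by simp
  show "integral\<^sup>L M X = integral\<^sup>L M X'"
    using integral_distr[OF X, of "\<lambda>y. y"] integral_distr[OF X', of "\<lambda>y. y"] distr by simp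
  have "(\<integral>\<^sup>+x. ennreal (exp (\<bar>X x - c\<bar> / C)) \<partial>M) = (\<integral>\<^sup>+x. ennreal (exp (\<bar>X' x - c\<bar> / C)) \<partial>M)"
    for C
    using nn_integral_distr[OF X, of "\<lambda>y. ennreal (exp (\<bar>y - c\<bar> / C))"]
      nn_integral_distr[OF X', of "\<lambda>y. ennreal (exp (\<bar>y - c\<bar> / C))"] distr
    by simp
  then show "psi1_norm M (\<lambda>x. X x - c) = psi1_norm M (\<lambda>x. X' x - c)"
    unfolding psi1_norm_def by simp
qed

lemma (in prob_space) expectation_pos:
  fixes X :: "'a \<Rightarrow> real"
  assumes "integrable M X" and pos: "\<And>x. x \<in> space M \<Longrightarrow> 0 < X x"
  shows "0 < expectation X"
proof -
  have nonneg: "AE x in M. 0 \<le> X x"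
    using pos by (simp add: AE_I2 less_imp_le)
  have "expectation X \<noteq> 0"
  proof
    assume "expectation X = 0"
    then have "AE x in M. X x = 0"
      using integral_nonneg_eq_0_iff_AE[OF assms(1) nonneg] by simp
    moreover have "AE x in M. 0 < X x"
      using pos by (auto intro!: AE_I2)
    ultimately have "AE x in M. False"
      by eventually_elim auto
    then show False
      by simp
  qed
  with integral_nonneg_AE[OF nonneg] show ?thesis
    by simp
qed

lemma (in finite_measure) measure_gt_le_if_measure_ge_le:
  fixes f :: "'a \<Rightarrow> real"
  assumes f[measurable]: "f \<in> borel_measurable M"
    and bound: "\<And>a. c < a \<Longrightarrow> measure M {x\<in>space M. a \<le> f x} \<le> \<delta>"
  shows "measure M {x\<in>space M. c < f x} \<le> \<delta>"
proof -
  define A where "A k = {x\<in>space M. c + 1 / Suc k \<le> f x}" for k :: nat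
  have "incseq A"
  proof (rule incseq_SucI)
    fix k
    have "1 / real (Suc (Suc k)) \<le> 1 / real (Suc k)"
      by (simp add: frac_le)
    then show "A k \<subseteq> A (Suc k)"
      unfolding A_def by auto
  qed
  moreover have "(\<Union>k. A k) = {x\<in>space M. c < f x}"
  proof (intro equalityI subsetI)
    fix x assume "x \<in> (\<Union>k. A k)"
    then obtain k where x: "x \<in> space M" "c + 1 / Suc k \<le> f x"
      by (auto simp: A_def)
    have "c < c + 1 / Suc k"
      by simp
    also have "\<dots> \<le> f x"
      by (rule x(2))
    finally show "x \<in> {x\<in>space M. c < f x}"
      using x(1) by simp
  next
    fix x assume "x \<in> {x\<in>space M. c < f x}"
    then have "x \<in> space M" "c < f x"
      by auto
    then obtain k where "inverse (real (Suc k)) < f x - c"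
      using reals_Archimedean[of "f x - c"] by auto
    with \<open>x \<in> space M\<close> have "x \<in> A k"
      by (simp add: A_def inverse_eq_divide)
    then show "x \<in> (\<Union>k. A k)"
      by blast
  qed
  moreover have "A k \<in> sets M" for k
    unfolding A_def by measurable
  ultimately have "(\<lambda>k. measure M (A k)) \<longlonglongrightarrow> measure M {x\<in>space M. c < f x}"
    using finite_Lim_measure_incseq[of A] by auto
  then show ?thesis
    by (rule LIMSEQ_le_const2) (auto simp: A_def intro!: bound)
qed

lemma (in finite_measure) measure_Collect_ge_mono:
  assumes "p \<le> measure M {x\<in>space M. P x}" and "\<And>x. x \<in> space M \<Longrightarrow> P x \<Longrightarrow> Q x"
    and "{x\<in>space M. Q x} \<in> sets M"
  shows "p \<le> measure M {x\<in>space M. Q x}"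
  using assms(1) finite_measure_mono[of "{x\<in>space M. P x}", OF _ assms(3)] assms(2) by force

lemma (in prob_space) subexponential_mgf_le:
  fixes Y :: "'a \<Rightarrow> real"
  assumes [measurable]: "Y \<in> borel_measurable M"
    and "integrable M Y" and "expectation Y = 0"
    and a: "a > 0" and psi: "(\<integral>\<^sup>+x. ennreal (exp (\<bar>Y x\<bar> / a)) \<partial>M) \<le> 2"
    and l: "0 \<le> l" "l \<le> 1 / a"
  shows "(\<integral>\<^sup>+x. ennreal (exp (l * Y x)) \<partial>M) \<le> ennreal (exp ((l * a)\<^sup>2))"
proof -
  define s where "s = l * a"
  have s: "0 \<le> s" "s \<le> 1"
    using l a by (auto simp: s_def field_simps)
  have int_psi: "integrable M (\<lambda>x. exp (\<bar>Y x\<bar> / a))"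
    using psi by (intro integrableI_bounded) (auto simp: order_le_less_trans)
  have "ennreal (expectation (\<lambda>x. exp (\<bar>Y x\<bar> / a))) = (\<integral>\<^sup>+x. ennreal (exp (\<bar>Y x\<bar> / a)) \<partial>M)"
    using int_psi by (intro nn_integral_eq_integral[symmetric]) auto
  with psi have "ennreal (expectation (\<lambda>x. exp (\<bar>Y x\<bar> / a))) \<le> ennreal 2"
    by simp
  then have E_psi: "expectation (\<lambda>x. exp (\<bar>Y x\<bar> / a)) \<le> 2"
    by (rule ennreal_le_iff[THEN iffD1, rotated]) simp
  have int_exp: "integrable M (\<lambda>x. exp (l * Y x))"
  proof (rule Bochner_Integration.integrable_bound[OF int_psi])
    have "l * Y x \<le> \<bar>Y x\<bar> / a" for x
    proof -
      have "l * Y x \<le> l * \<bar>Y x\<bar>"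
        using l by (simp add: mult_left_mono)
      also have "\<dots> \<le> \<bar>Y x\<bar> / a"
        using mult_right_mono[OF l(2) abs_ge_zero, of "Y x"] by simp
      finally show ?thesis .
    qed
    then show "AE x in M. norm (exp (l * Y x)) \<le> norm (exp (\<bar>Y x\<bar> / a))"
      by simp
  qed simp
  have pointwise: "exp (l * Y x) \<le> 1 + (s / a) * Y x + s\<^sup>2 * (exp (\<bar>Y x\<bar> / a) - 1)" for x
    using exp_scaled_le_quadratic[OF s, of "Y x / a"] a by (simp add: s_def)
  have "expectation (\<lambda>x. exp (l * Y x))
      \<le> expectation (\<lambda>x. 1 + (s / a) * Y x + s\<^sup>2 * (exp (\<bar>Y x\<bar> / a) - 1))"
    using assms int_psi by (intro integral_mono int_exp pointwise) auto
  also have "\<dots> = 1 + s\<^sup>2 * (expectation (\<lambda>x. exp (\<bar>Y x\<bar> / a)) - 1)"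
    using assms int_psi by (simp add: prob_space)
  also have "\<dots> \<le> 1 + s\<^sup>2"
    using E_psi by (simp add: mult_left_le)
  also have "\<dots> \<le> exp (s\<^sup>2)"
    by simp
  finally show ?thesis
    using int_exp by (subst nn_integral_eq_integral) (auto simp: s_def)
qed

lemma (in prob_space) indep_vars_borel_measurable:
  assumes "indep_vars (\<lambda>_. borel) Y I" and "i \<in> I"
  shows "Y i \<in> borel_measurable M"
  using assms unfolding indep_vars_def by auto

lemma (in prob_space) indep_sum_tail_le_exp:
  fixes Y :: "nat \<Rightarrow> 'a \<Rightarrow> real" and l \<epsilon> g :: real
  assumes fin: "finite I" and indep: "indep_vars (\<lambda>_. borel) Y I" and l: "l > 0"
    and mgf: "\<And>i. i \<in> I \<Longrightarrow> (\<integral>\<^sup>+x. ennreal (exp (l * Y i x)) \<partial>M) \<le> ennreal (exp g)"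
  shows "prob {x\<in>space M. \<epsilon> \<le> (\<Sum>i\<in>I. Y i x)} \<le> exp (- l * \<epsilon> + card I * g)"
proof -
  have [measurable]: "Y i \<in> borel_measurable M" if "i \<in> I" for i
    using indep_vars_borel_measurable[OF indep that] .
  have "ennreal (prob {x\<in>space M. \<epsilon> \<le> (\<Sum>i\<in>I. Y i x)})
      \<le> ennreal (exp (- l * \<epsilon>)) *
          (\<integral>\<^sup>+x. ennreal (exp (l * (\<Sum>i\<in>I. Y i x))) * indicator (space M) x \<partial>M)"
    unfolding emeasure_eq_measure[symmetric] by (intro Chernoff_ineq_nn_integral_ge l) auto
  also have "(\<integral>\<^sup>+x. ennreal (exp (l * (\<Sum>i\<in>I. Y i x))) * indicator (space M) x \<partial>M)
      = (\<integral>\<^sup>+x. (\<Prod>i\<in>I. ennreal (exp (l * Y i x))) \<partial>M)"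
    by (intro nn_integral_cong) (simp_all add: sum_distrib_left exp_sum fin prod_ennreal)
  also have "\<dots> = (\<Prod>i\<in>I. \<integral>\<^sup>+x. ennreal (exp (l * Y i x)) \<partial>M)"
    by (intro indep_vars_nn_integral fin indep_vars_compose2[OF indep]) auto
  also have "ennreal (exp (- l * \<epsilon>)) * \<dots> \<le> ennreal (exp (- l * \<epsilon>)) * (\<Prod>i\<in>I. ennreal (exp g))"
    by (intro mult_left_mono prod_mono_ennreal mgf) auto
  also have "\<dots> = ennreal (exp (- l * \<epsilon>) * exp g ^ card I)"
    by (simp add: ennreal_mult ennreal_power)
  also have "exp (- l * \<epsilon>) * exp g ^ card I = exp (- l * \<epsilon> + card I * g)"
    by (simp only: exp_add exp_of_nat_mult)
  finally show ?thesis
    by (simp add: ennreal_le_iff)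
qed

lemma (in prob_space) subexponential_sum_upper_tail:
  fixes Y :: "nat \<Rightarrow> 'a \<Rightarrow> real" and a \<delta> :: real
  assumes fin: "finite I" and "I \<noteq> {}" and indep: "indep_vars (\<lambda>_. borel) Y I"
    and int: "\<And>i. i \<in> I \<Longrightarrow> integrable M (Y i)"
    and centred: "\<And>i. i \<in> I \<Longrightarrow> expectation (Y i) = 0"
    and a: "a > 0" and psi: "\<And>i. i \<in> I \<Longrightarrow> (\<integral>\<^sup>+x. ennreal (exp (\<bar>Y i x\<bar> / a)) \<partial>M) \<le> 2"
    and \<delta>: "0 < \<delta>" "\<delta> < 1"
  shows "prob {x\<in>space M. card I * a * C_nd (card I) \<delta> \<le> (\<Sum>i\<in>I. Y i x)} \<le> \<delta> / 2"
proof -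
  define t where "t = ln (2 / \<delta>)"
  have "t > 0" and exp_t: "exp (- t) = \<delta> / 2"
    using \<delta> by (simp_all add: t_def exp_minus)
  have "real (card I) > 0"
    using assms by (simp add: card_gt_0_iff)
  then obtain u :: real where u: "0 < u" "u \<le> 1"
    and rate: "card I * u\<^sup>2 - u * card I * C_nd (card I) \<delta> \<le> - t"
    using exists_tilt_sqrt_plus_linear_rate[OF \<open>t > 0\<close> \<open>real (card I) > 0\<close>]
    by (auto simp: C_nd_def t_def)
  have "(\<integral>\<^sup>+x. ennreal (exp (u / a * Y i x)) \<partial>M) \<le> ennreal (exp (u\<^sup>2))" if "i \<in> I" for i
    using subexponential_mgf_le[OF indep_vars_borel_measurable[OF indep that], of a "u / a"]
      that int centred psi a u
    by (simp add: divide_right_mono)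
  then have "prob {x\<in>space M. card I * a * C_nd (card I) \<delta> \<le> (\<Sum>i\<in>I. Y i x)}
      \<le> exp (- (u / a) * (card I * a * C_nd (card I) \<delta>) + card I * u\<^sup>2)"
    using a u by (intro indep_sum_tail_le_exp fin indep) auto
  also have "\<dots> \<le> exp (- t)"
    using a rate by (simp add: algebra_simps)
  finally show ?thesis
    using exp_t by simp
qed

lemma (in prob_space) subexponential_sum_two_sided_tail:
  fixes Y :: "nat \<Rightarrow> 'a \<Rightarrow> real" and a \<delta> :: real
  assumes fin: "finite I" and "I \<noteq> {}" and indep: "indep_vars (\<lambda>_. borel) Y I"
    and "\<And>i. i \<in> I \<Longrightarrow> integrable M (Y i)"
    and "\<And>i. i \<in> I \<Longrightarrow> expectation (Y i) = 0"
    and "a > 0" and "\<And>i. i \<in> I \<Longrightarrow> (\<integral>\<^sup>+x. ennreal (exp (\<bar>Y i x\<bar> / a)) \<partial>M) \<le> 2"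
    and "0 < \<delta>" "\<delta> < 1"
  shows "prob {x\<in>space M. card I * a * C_nd (card I) \<delta> \<le> \<bar>\<Sum>i\<in>I. Y i x\<bar>} \<le> \<delta>"
proof -
  let ?r = "card I * a * C_nd (card I) \<delta>"
  have [measurable]: "Y i \<in> borel_measurable M" if "i \<in> I" for i
    using indep_vars_borel_measurable[OF indep that] .
  have upper: "prob {x\<in>space M. ?r \<le> (\<Sum>i\<in>I. Y i x)} \<le> \<delta> / 2"
    by (rule subexponential_sum_upper_tail) fact+
  have "prob {x\<in>space M. ?r \<le> (\<Sum>i\<in>I. - Y i x)} \<le> \<delta> / 2"
    using assms by (intro subexponential_sum_upper_tail indep_vars_compose2[OF indep]) auto
  then have lower: "prob {x\<in>space M. ?r \<le> - (\<Sum>i\<in>I. Y i x)} \<le> \<delta> / 2"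
    by (simp add: sum_negf)
  have "prob {x\<in>space M. ?r \<le> \<bar>\<Sum>i\<in>I. Y i x\<bar>}
      = prob ({x\<in>space M. ?r \<le> (\<Sum>i\<in>I. Y i x)} \<union> {x\<in>space M. ?r \<le> - (\<Sum>i\<in>I. Y i x)})"
    by (rule arg_cong[where f = prob]) (auto simp: abs_if)
  also have "\<dots> \<le> prob {x\<in>space M. ?r \<le> (\<Sum>i\<in>I. Y i x)} + prob {x\<in>space M. ?r \<le> - (\<Sum>i\<in>I. Y i x)}"
    using fin by (intro measure_Un_le) measurable
  finally show ?thesis
    using upper lower by linarith
qed

lemma (in prob_space) subexponential_sum_deviation:
  fixes Y :: "nat \<Rightarrow> 'a \<Rightarrow> real" and \<alpha> \<delta> :: real
  assumes fin: "finite I" and "I \<noteq> {}" and indep: "indep_vars (\<lambda>_. borel) Y I"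
    and "\<And>i. i \<in> I \<Longrightarrow> integrable M (Y i)"
    and "\<And>i. i \<in> I \<Longrightarrow> expectation (Y i) = 0"
    and psi1: "\<And>i. i \<in> I \<Longrightarrow> psi1_norm M (Y i) \<le> ereal \<alpha>"
    and \<delta>: "0 < \<delta>" "\<delta> < 1"
  shows "prob {x\<in>space M. \<bar>\<Sum>i\<in>I. Y i x\<bar> \<le> card I * \<alpha> * C_nd (card I) \<delta>} \<ge> 1 - \<delta>"
proof -
  define r where "r = card I * C_nd (card I) \<delta>"
  have n: "real (card I) > 0"
    using assms by (simp add: card_gt_0_iff)
  moreover have C: "C_nd (card I) \<delta> > 0"
    using n \<delta> by (simp add: C_nd_def add_pos_pos)
  ultimately have "r > 0"
    by (simp add: r_def)
  have [measurable]: "Y i \<in> borel_measurable M" if "i \<in> I" for i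
    using indep_vars_borel_measurable[OF indep that] .
  obtain i\<^sub>0 where "i\<^sub>0 \<in> I"
    using \<open>I \<noteq> {}\<close> by blast
  have "0 \<le> \<alpha>"
    using order_trans[OF psi1_norm_nonneg psi1[OF \<open>i\<^sub>0 \<in> I\<close>]] by simp
  \<comment> \<open>The infimum defining the \<open>\<psi>\<^sub>1\<close>-norm need not be attained, so every \<open>a > \<alpha>\<close> is used.\<close>
  have "prob {x\<in>space M. \<alpha> * r < \<bar>\<Sum>i\<in>I. Y i x\<bar>} \<le> \<delta>"
  proof (rule measure_gt_le_if_measure_ge_le)
    fix b assume "\<alpha> * r < b"
    then have "\<alpha> < b / r"
      using \<open>r > 0\<close> by (simp add: field_simps)
    then have "psi1_norm M (Y i) < ereal (b / r)" if "i \<in> I" for i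
      using psi1[OF that] by (simp add: le_less_trans)
    moreover have "b / r > 0"
      using \<open>0 \<le> \<alpha>\<close> \<open>\<alpha> < b / r\<close> by linarith
    ultimately have "prob {x\<in>space M. card I * (b / r) * C_nd (card I) \<delta> \<le> \<bar>\<Sum>i\<in>I. Y i x\<bar>} \<le> \<delta>"
      using assms by (intro subexponential_sum_two_sided_tail psi1_norm_lessD) auto
    moreover have "card I * (b / r) * C_nd (card I) \<delta> = b"
      using n C by (simp add: r_def)
    ultimately show "prob {x\<in>space M. b \<le> \<bar>\<Sum>i\<in>I. Y i x\<bar>} \<le> \<delta>"
      by simp
  qed (use fin in measurable)
  moreover have "{x\<in>space M. \<alpha> * r < \<bar>\<Sum>i\<in>I. Y i x\<bar>} \<in> events"
    using fin by measurable
  moreover have "{x\<in>space M. \<bar>\<Sum>i\<in>I. Y i x\<bar> \<le> \<alpha> * r}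
      = space M - {x\<in>space M. \<alpha> * r < \<bar>\<Sum>i\<in>I. Y i x\<bar>}"
    by auto
  ultimately show ?thesis
    by (simp add: prob_compl r_def mult.assoc mult.left_commute)
qed

lemma (in prob_space) iid_sample_mean_deviation:
  fixes X :: "nat \<Rightarrow> 'a \<Rightarrow> real" and n :: nat and \<mu> \<alpha> \<delta> :: real
  assumes indep: "indep_vars (\<lambda>_. borel) X {1..n}"
    and ident: "\<And>i. i \<in> {1..n} \<Longrightarrow> distr M borel (X i) = distr M borel (X 1)"
    and "n \<ge> 1" and "integrable M (X 1)" and "expectation (X 1) = \<mu>"
    and "psi1_norm M (\<lambda>x. X 1 x - \<mu>) \<le> ereal \<alpha>" and "0 < \<delta>" "\<delta> < 1"
  shows "prob {x\<in>space M. \<bar>(\<Sum>i=1..n. X i x) / n - \<mu>\<bar> \<le> \<alpha> * C_nd n \<delta>} \<ge> 1 - \<delta>"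
proof -
  have one: "1 \<in> {1..n}"
    using \<open>n \<ge> 1\<close> by simp
  have "integrable M (X i) \<and> expectation (X i) = \<mu> \<and> psi1_norm M (\<lambda>x. X i x - \<mu>) \<le> ereal \<alpha>"
    if "i \<in> {1..n}" for i
  proof -
    note same_distr = indep_vars_borel_measurable[OF indep that]
      indep_vars_borel_measurable[OF indep one] ident[OF that]
    show ?thesis
      using integrable_cong_distr[OF same_distr] integral_cong_distr[OF same_distr]
        psi1_norm_cong_distr[OF same_distr, of \<mu>] assms by simp
  qed
  then have "prob {x\<in>space M. \<bar>\<Sum>i\<in>{1..n}. X i x - \<mu>\<bar> \<le> card {1..n} * \<alpha> * C_nd (card {1..n}) \<delta>}
      \<ge> 1 - \<delta>"
    using assms by (intro subexponential_sum_deviation indep_vars_compose2[OF indep])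
      (auto simp: prob_space)
  moreover have "\<bar>\<Sum>i\<in>{1..n}. X i x - \<mu>\<bar> = n * \<bar>(\<Sum>i=1..n. X i x) / n - \<mu>\<bar>" for x
  proof -
    have "(\<Sum>i\<in>{1..n}. X i x - \<mu>) = n * ((\<Sum>i=1..n. X i x) / n - \<mu>)"
      using \<open>n \<ge> 1\<close> by (simp add: sum_subtractf field_simps)
    then show ?thesis
      by (simp add: abs_mult)
  qed
  ultimately show ?thesis
    using \<open>n \<ge> 1\<close> by (simp add: mult.assoc)
qed

theorem lemma5p1:
  fixes M :: "'a measure" and X :: "nat \<Rightarrow> 'a \<Rightarrow> real"
    and n :: nat and \<mu> \<alpha> \<delta> :: real
  assumes "prob_space M"
    and rv: "\<And>i. i \<in> {1..n} \<Longrightarrow> X i \<in> borel_measurable M"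
    and indep: "prob_space.indep_vars M (\<lambda>_. borel) X {1..n}"
    and ident: "\<And>i. i \<in> {1..n} \<Longrightarrow> distr M borel (X i) = distr M borel (X 1)"
    and pos: "\<And>i x. i \<in> {1..n} \<Longrightarrow> x \<in> space M \<Longrightarrow> X i x > 0"
    and n_pos: "n \<ge> 1"
    and integ: "integrable M (X 1)"
    and mean: "(\<integral>x. X 1 x \<partial>M) = \<mu>"
    and alpha: "psi1_norm M (\<lambda>x. X 1 x - \<mu>) = ereal \<alpha>"
    and delta: "0 < \<delta>" "\<delta> < 1"
  shows "measure M {x \<in> space M.
             \<mu> \<ge> ((\<Sum>i=1..n. X i x) / real n) * max 0 (1 - (\<alpha> / \<mu>) * C_nd n \<delta>)}
           \<ge> 1 - \<delta>
       \<and> ((\<alpha> / \<mu>) * C_nd n \<delta> \<le> 1/4 \<longrightarrow>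
          measure M {x \<in> space M.
             ((\<Sum>i=1..n. X i x) / real n) * max 0 (1 - (\<alpha> / \<mu>) * C_nd n \<delta>) \<le> \<mu>
             \<and> \<mu> \<le> ((\<Sum>i=1..n. X i x) / real n) * (1 + 4/3 * (\<alpha> / \<mu>) * C_nd n \<delta>)}
           \<ge> 1 - \<delta>)"
proof -
  interpret prob_space M by fact
  define \<eta> where "\<eta> = \<alpha> / \<mu> * C_nd n \<delta>"
  define avg where "avg x = (\<Sum>i=1..n. X i x) / n" for x
  have \<mu>: "\<mu> > 0"
    using expectation_pos[OF integ pos] n_pos mean by simp
  have "prob {x\<in>space M. \<bar>avg x - \<mu>\<bar> \<le> \<alpha> * C_nd n \<delta>} \<ge> 1 - \<delta>"
    unfolding avg_def using alpha by (intro iid_sample_mean_deviation assms) auto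
  moreover have "\<alpha> * C_nd n \<delta> = \<eta> * \<mu>"
    using \<mu> by (simp add: \<eta>_def)
  ultimately have dev: "prob {x\<in>space M. \<bar>avg x - \<mu>\<bar> \<le> \<eta> * \<mu>} \<ge> 1 - \<delta>"
    by simp
  have [measurable]: "avg \<in> borel_measurable M"
    unfolding avg_def by (intro borel_measurable_divide borel_measurable_sum rv) auto
  have "prob {x\<in>space M. avg x * max 0 (1 - \<eta>) \<le> \<mu>} \<ge> 1 - \<delta>"
    by (rule measure_Collect_ge_mono[OF dev])
      (blast intro: mult_pos_part_le_if_abs_diff_le[OF _ \<mu>], measurable)
  moreover have "prob {x\<in>space M. avg x * max 0 (1 - \<eta>) \<le> \<mu> \<and> \<mu> \<le> avg x * (1 + 4/3 * \<eta>)} \<ge> 1 - \<delta>"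
    if "\<eta> \<le> 1/4"
    by (rule measure_Collect_ge_mono[OF dev]) (blast intro: mult_pos_part_le_if_abs_diff_le[OF _ \<mu>]
        le_mult_if_abs_diff_le[OF _ \<mu> that], measurable)
  moreover have \<eta>_scaled: "4/3 * (\<alpha> / \<mu>) * C_nd n \<delta> = 4/3 * \<eta>"
    by (simp add: \<eta>_def)
  ultimately show ?thesis
    unfolding \<eta>_scaled \<eta>_def[symmetric] avg_def[symmetric] by blast
qed

end
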